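(* Let $L$ be a relational language and $<\,\notin L$ a binary relation symbol. Let $\mathcal{S} = (S,L^S,<^S)$ be an enumerated $L$-structure such that $(S,L^S)$ is a Fraïssé limit which has finite big Ramsey degrees, whose age has the strong amalgamation property, and which has natural 1-point extensions. Then for every $\mathcal{A}\in\mathrm{Fin}(\mathcal{S})$ there is $n\in\mathbb{N}$ such that for every $k\in\mathbb{N}$ and every family of colorings $\gamma_\mathcal{B} : \binom{\mathcal{B}}{\mathcal{A}}\to k$ indexed by $\mathcal{B}\in\mathrm{Fin}(\mathcal{S})$, there are a substructure $\mathcal{S}'$ of $\mathcal{S}$ isomorphic to $\mathcal{S}$ and a choice function $c$ assigning to each $\mathcal{E}\in\binom{\mathcal{S}'}{\mathcal{A}}$ some $c(\mathcal{E})\in\mathrm{Fin}(\mathcal{S})$ with $\mathcal{E}\le c(\mathcal{E})$, such that $$\Big|\Big\{\gamma_{c(\mathcal{E})}(\mathcal{E}) : \mathcal{E}\in\binom{\mathcal{S}'}{\mathcal{A}}\Big\}\Big|\le n.$$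
   Context: For $L$-structures, an embedding is an injective map preserving and reflecting all relations; $\mathrm{Emb}(\mathcal{A},\mathcal{B})$ is the set of embeddings. $\mathcal{A}\le\mathcal{B}$ means $\mathcal{A}$ is an induced substructure of $\mathcal{B}$; $\mathcal{S}[A]$ is the substructure induced on $A$. $\mathrm{Fin}(\mathcal{S})=\{\mathcal{S}[A]:\varnothing\ne A\subseteq S, A\text{ finite}\}$, and $\binom{\mathcal{B}}{\mathcal{A}}=\{\mathcal{E}:\mathcal{E}\cong\mathcal{A},\ \mathcal{E}\le\mathcal{B}\}$ (all as $(L\cup\{<\})$-structures). An enumerated $L$-structure is an $(L\cup\{<\})$-structure $(S,L^S,<^S)$ with $(S,<^S)$ of order type $\omega$. A Fraïssé limit is a countably infinite ultrahomogeneous structure; its age (finite structures embeddable into it) has strong amalgamation if any two embeddings $f:\mathcal{A}\hookrightarrow\mathcal{B}$, $g:\mathcal{A}\hookrightarrow\mathcal{C}$ in the age can be completed by embeddings $f':\mathcal{B}\hookrightarrow\mathcal{D}$, $g':\mathcal{C}\hookrightarrow\mathcal{D}$ into some $\mathcal{D}$ in the age with $f'\circ f=g'\circ g$ and $f'(B)\cap g'(C)=f'(f(A))$. $\mathcal{F}$ has finite big Ramsey degrees if for every finite $\mathcal{A}$ in its age there is $n$ such that every coloring $\chi:\mathrm{Emb}(\mathcal{A},\mathcal{F})\to k$ ($k\in\mathbb{N}$) admits $w\in\mathrm{Emb}(\mathcal{F},\mathcal{F})$ with $|\chi(w\circ\mathrm{Emb}(\mathcal{A},\mathcal{F}))|\le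 n$. $\mathcal{F}$ has natural 1-point extensions if there is a functor $J:\mathrm{Fin}(\mathcal{F})\to\mathrm{Fin}(\mathcal{F})$ (morphisms: embeddings) such that for each $\mathcal{A}=(A,L^A)$ with $J(\mathcal{A})=(A',L^{A'})$, $\mathcal{A}\le J(\mathcal{A})$ and $|A'\setminus A|=1$, and for each embedding $f:\mathcal{A}\hookrightarrow\mathcal{B}$, $J(f)$ extends $f$ and maps the point of $A'\setminus A$ to the point of $B'\setminus B$. *)

theory Defs
  imports Main "HOL-Library.FuncSet" "HOL-Library.Countable_Set"
begin

text \<open>A relational language: symbols of type 'l with arities ar. An L-structure on a
carrier set X of type 'a interprets each symbol l by R l, a predicate on tuples
(lists) of length ar l. Only tuples of the right length with entries in the carrier matter.\<close>

definition emb :: "('l \<Rightarrow> nat) \<Rightarrow> ('l \<Rightarrow> 'a list \<Rightarrow> bool) \<Rightarrow> 'a set \<Rightarrow> 'a set \<Rightarrow> ('a \<Rightarrow> 'a) \<Rightarrow> bool" where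
  "emb ar R X Y f \<longleftrightarrow> inj_on f X \<and> f ` X \<subseteq> Y \<and>
     (\<forall>l xs. length xs = ar l \<and> set xs \<subseteq> X \<longrightarrow> (R l (map f xs) \<longleftrightarrow> R l xs))"

definition Emb :: "('l \<Rightarrow> nat) \<Rightarrow> ('l \<Rightarrow> 'a list \<Rightarrow> bool) \<Rightarrow> 'a set \<Rightarrow> 'a set \<Rightarrow> ('a \<Rightarrow> 'a) set" where
  "Emb ar R X Y = {f. emb ar R X Y f \<and> f \<in> extensional X}"

definition iso_L :: "('l \<Rightarrow> nat) \<Rightarrow> ('l \<Rightarrow> 'a list \<Rightarrow> bool) \<Rightarrow> 'a set \<Rightarrow> 'a set \<Rightarrow> ('a \<Rightarrow> 'a) \<Rightarrow> bool" where
  "iso_L ar R X Y h \<longleftrightarrow> bij_betw h X Y \<and> emb ar R X Y h"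

definition oemb :: "('l \<Rightarrow> nat) \<Rightarrow> ('l \<Rightarrow> 'a list \<Rightarrow> bool) \<Rightarrow> ('a \<Rightarrow> 'a \<Rightarrow> bool) \<Rightarrow> 'a set \<Rightarrow> 'a set \<Rightarrow> ('a \<Rightarrow> 'a) \<Rightarrow> bool" where
  "oemb ar R lt X Y f \<longleftrightarrow> emb ar R X Y f \<and> (\<forall>x\<in>X. \<forall>y\<in>X. lt (f x) (f y) \<longleftrightarrow> lt x y)"

definition oiso :: "('l \<Rightarrow> nat) \<Rightarrow> ('l \<Rightarrow> 'a list \<Rightarrow> bool) \<Rightarrow> ('a \<Rightarrow> 'a \<Rightarrow> bool) \<Rightarrow> 'a set \<Rightarrow> 'a set \<Rightarrow> bool" where
  "oiso ar R lt X Y \<longleftrightarrow> (\<exists>f. bij_betw f X Y \<and> oemb ar R lt X Y f)"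

text \<open>Fin(S): finite nonempty subsets (identified with the induced substructures).\<close>
definition Fin :: "'a set \<Rightarrow> 'a set set" where
  "Fin S = {A. A \<noteq> {} \<and> finite A \<and> A \<subseteq> S}"

definition binom :: "('l \<Rightarrow> nat) \<Rightarrow> ('l \<Rightarrow> 'a list \<Rightarrow> bool) \<Rightarrow> ('a \<Rightarrow> 'a \<Rightarrow> bool) \<Rightarrow> 'a set \<Rightarrow> 'a set \<Rightarrow> 'a set set" where
  "binom ar R lt B A = {E. E \<subseteq> B \<and> oiso ar R lt A E}"

text \<open>(S, lt) has order type omega.\<close>
definition enumerated :: "'a set \<Rightarrow> ('a \<Rightarrow> 'a \<Rightarrow> bool) \<Rightarrow> bool" where
  "enumerated S lt \<longleftrightarrow> infinite S \<and>
     (\<forall>x\<in>S. \<not> lt x x) \<and>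
     (\<forall>x\<in>S. \<forall>y\<in>S. \<forall>z\<in>S. lt x y \<and> lt y z \<longrightarrow> lt x z) \<and>
     (\<forall>x\<in>S. \<forall>y\<in>S. x \<noteq> y \<longrightarrow> lt x y \<or> lt y x) \<and>
     (\<forall>x\<in>S. finite {y\<in>S. lt y x})"

text \<open>Fraisse limit: countably infinite and ultrahomogeneous.\<close>
definition fraisse_limit :: "('l \<Rightarrow> nat) \<Rightarrow> ('l \<Rightarrow> 'a list \<Rightarrow> bool) \<Rightarrow> 'a set \<Rightarrow> bool" where
  "fraisse_limit ar R S \<longleftrightarrow> countable S \<and> infinite S \<and>
     (\<forall>A B h. finite A \<and> A \<subseteq> S \<and> B \<subseteq> S \<and> iso_L ar R A B h \<longrightarrow>
        (\<exists>\<sigma>. bij_betw \<sigma> S S \<and> emb ar R S S \<sigma> \<and> (\<forall>x\<in>A. \<sigma> x = h x)))"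

text \<open>Strong amalgamation of the age; every member of the age is isomorphic to
some finite induced substructure S[A] (A possibly empty), so we quantify over those.\<close>
definition strong_amalgamation :: "('l \<Rightarrow> nat) \<Rightarrow> ('l \<Rightarrow> 'a list \<Rightarrow> bool) \<Rightarrow> 'a set \<Rightarrow> bool" where
  "strong_amalgamation ar R S \<longleftrightarrow>
     (\<forall>A B C f g. finite A \<and> A \<subseteq> S \<and> finite B \<and> B \<subseteq> S \<and> finite C \<and> C \<subseteq> S \<and>
        f \<in> Emb ar R A B \<and> g \<in> Emb ar R A C \<longrightarrow>
        (\<exists>D f' g'. finite D \<and> D \<subseteq> S \<and> f' \<in> Emb ar R B D \<and> g' \<in> Emb ar R C D \<and>
           (\<forall>x\<in>A. f' (f x) = g' (g x)) \<and> f' ` B \<inter> g' ` C = f' ` f ` A))"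

definition finite_big_ramsey_degrees :: "('l \<Rightarrow> nat) \<Rightarrow> ('l \<Rightarrow> 'a list \<Rightarrow> bool) \<Rightarrow> 'a set \<Rightarrow> bool" where
  "finite_big_ramsey_degrees ar R S \<longleftrightarrow>
     (\<forall>A. finite A \<and> A \<subseteq> S \<longrightarrow>
       (\<exists>n::nat. \<forall>(k::nat) (\<chi>::('a \<Rightarrow> 'a) \<Rightarrow> nat).
          (\<forall>f\<in>Emb ar R A S. \<chi> f < k) \<longrightarrow>
          (\<exists>w\<in>Emb ar R S S.
             card (\<chi> ` {restrict (w \<circ> f) A | f. f \<in> Emb ar R A S}) \<le> n)))"

text \<open>Natural 1-point extensions: a functor J on Fin(S) (morphisms: L-embeddings),
given by its object part J and morphism part Jm.\<close>
definition natural_1pt_ext :: "('l \<Rightarrow> nat) \<Rightarrow> ('l \<Rightarrow> 'a list \<Rightarrow> bool) \<Rightarrow> 'a set \<Rightarrow> bool" where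
  "natural_1pt_ext ar R S \<longleftrightarrow>
     (\<exists>(J::'a set \<Rightarrow> 'a set) (Jm::'a set \<Rightarrow> 'a set \<Rightarrow> ('a \<Rightarrow> 'a) \<Rightarrow> ('a \<Rightarrow> 'a)).
        (\<forall>A\<in>Fin S. J A \<in> Fin S \<and> A \<subseteq> J A \<and> card (J A - A) = 1) \<and>
        (\<forall>A\<in>Fin S. \<forall>B\<in>Fin S. \<forall>f\<in>Emb ar R A B.
           Jm A B f \<in> Emb ar R (J A) (J B) \<and> (\<forall>x\<in>A. Jm A B f x = f x) \<and>
           (\<forall>x\<in>J A - A. Jm A B f x \<in> J B - B)) \<and>
        (\<forall>A\<in>Fin S. Jm A A (restrict id A) = restrict id (J A)) \<and>
        (\<forall>A\<in>Fin S. \<forall>B\<in>Fin S. \<forall>C\<in>Fin S. \<forall>f\<in>Emb ar R A B. \<forall>g\<in>Emb ar R B C.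
           Jm A C (restrict (g \<circ> f) A) = restrict (Jm B C g \<circ> Jm A B f) (J A)))"

end

theory Submission
  imports Defs
begin

text \<open>Choose c E = E and colour each copy E of A by \<gamma> E E. Pulled back to embeddings of A, this
  is a colouring of Emb(A, S), so finite big Ramsey degrees give a copy w ` S of the L-structure
  on which at most n colours occur. It remains to find inside w ` S a copy of S that also respects
  the enumeration. Build it point by point along the enumeration: by strong amalgamation and
  ultrahomogeneity every finite partial embedding into S extends by one point while avoiding any
  given finite set, and only finitely many points of S have w-image not above the w-images of the
  points placed so far.\<close>

lemma emb_cong:
  assumes "emb ar R X Y f" "\<And>x. x \<in> X \<Longrightarrow> f x = g x"
  shows "emb ar R X Y g"
proof -
  have map_eq: "map g xs = map f xs" if "set xs \<subseteq> X" for xs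
    using that assms(2) by (induction xs) auto
  have "inj_on g X" "g ` X \<subseteq> Y"
    using assms unfolding emb_def by (auto simp: inj_on_def)
  with assms(1) show ?thesis
    unfolding emb_def by (simp add: map_eq del: map_eq_conv)
qed

lemma emb_subset:
  assumes "emb ar R X Y f" "X' \<subseteq> X" "f ` X' \<subseteq> Y'"
  shows "emb ar R X' Y' f"
  using assms unfolding emb_def by (auto intro: inj_on_subset)

lemma emb_subset_domain: "emb ar R X Y f \<Longrightarrow> X' \<subseteq> X \<Longrightarrow> emb ar R X' Y f"
  unfolding emb_def by (auto intro: inj_on_subset)

lemma emb_mono_codomain: "emb ar R X Y f \<Longrightarrow> Y \<subseteq> Y' \<Longrightarrow> emb ar R X Y' f"
  unfolding emb_def by auto

lemma emb_id_subset: "X \<subseteq> Y \<Longrightarrow> emb ar R X Y id"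
  unfolding emb_def by auto

lemma restrict_in_Emb: "emb ar R X Y f \<Longrightarrow> restrict f X \<in> Emb ar R X Y"
  unfolding Emb_def by (auto intro: emb_cong)

lemma emb_comp:
  assumes "emb ar R X Y f" "emb ar R Y Z g"
  shows "emb ar R X Z (g \<circ> f)"
proof -
  have "R l (map g (map f xs)) \<longleftrightarrow> R l xs" if "length xs = ar l" "set xs \<subseteq> X" for l xs
    using that assms unfolding emb_def by (metis image_mono length_map set_map order_trans)
  moreover have "inj_on (g \<circ> f) X"
    using assms unfolding emb_def by (meson comp_inj_on inj_on_subset)
  ultimately show ?thesis
    using assms unfolding emb_def by (auto simp: image_subset_iff)
qed

lemma emb_inv_into:
  assumes "emb ar R X Y f"
  shows "emb ar R (f ` X) X (inv_into X f)"
proof -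
  have "R l (map (inv_into X f) xs) \<longleftrightarrow> R l xs" if "length xs = ar l" "set xs \<subseteq> f ` X" for l xs
  proof -
    have "map f (map (inv_into X f) xs) = xs"
      unfolding map_map by (rule map_idI) (use that in \<open>auto simp: f_inv_into_f\<close>)
    with that assms show ?thesis
      unfolding emb_def by (metis image_subsetI inv_into_into length_map set_map subsetD)
  qed
  then show ?thesis
    unfolding emb_def by (auto intro: inj_on_inv_into inv_into_into)
qed

lemma emb_if_emb_on_finite_subsets:
  assumes "\<And>F. finite F \<Longrightarrow> F \<subseteq> X \<Longrightarrow> emb ar R F Y f"
  shows "emb ar R X Y f"
  unfolding emb_def
proof (intro conjI allI impI)
  show "inj_on f X"
  proof (rule inj_onI)
    fix x y assume "x \<in> X" "y \<in> X" "f x = f y"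
    with assms[of "{x, y}"] show "x = y" by (auto simp: emb_def)
  qed
  show "f ` X \<subseteq> Y"
  proof
    fix y assume "y \<in> f ` X"
    then obtain x where "x \<in> X" "y = f x" by blast
    with assms[of "{x}"] show "y \<in> Y" by (auto simp: emb_def)
  qed
  show "R l (map f xs) \<longleftrightarrow> R l xs" if "length xs = ar l \<and> set xs \<subseteq> X" for l xs
    using that assms[of "set xs"] by (auto simp: emb_def)
qed

lemma oemb_imp_oiso_image:
  assumes "oemb ar R lt X Y f"
  shows "oiso ar R lt X (f ` X)"
  using assms emb_subset[of ar R X Y f X "f ` X"]
  unfolding oiso_def oemb_def emb_def bij_betw_def by auto

lemma Fin_if_in_binom:
  assumes "finite A" "A \<noteq> {}" "B \<subseteq> S" "E \<in> binom ar R lt B A"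
  shows "E \<in> Fin S"
  using assms unfolding binom_def oiso_def Fin_def bij_betw_def by auto

lemma fraisse_limit_undo_emb:
  assumes "fraisse_limit ar R S" "finite B" "B \<subseteq> S" "emb ar R B S f"
  shows "\<exists>\<tau>. emb ar R S S \<tau> \<and> (\<forall>b\<in>B. \<tau> (f b) = b)"
proof -
  have "inj_on f B" "f ` B \<subseteq> S"
    using assms(4) by (auto simp: emb_def)
  then have "iso_L ar R (f ` B) B (inv_into B f)"
    using emb_inv_into[OF assms(4)] by (simp add: iso_L_def bij_betw_inv_into inj_on_imp_bij_betw)
  moreover have "finite (f ` B)"
    using assms(2) by simp
  ultimately obtain \<tau> where "emb ar R S S \<tau>" "\<forall>y\<in>f ` B. \<tau> y = inv_into B f y"
    using assms(1,3) \<open>f ` B \<subseteq> S\<close> unfolding fraisse_limit_def by blast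
  with \<open>inj_on f B\<close> show ?thesis by auto
qed

lemma emb_extend_avoiding:
  assumes fl: "fraisse_limit ar R S" and sa: "strong_amalgamation ar R S"
    and F: "finite F" "F \<subseteq> S" and x: "x \<in> S" "x \<notin> F" and \<psi>: "emb ar R F S \<psi>"
    and D: "finite D"
  shows "\<exists>u\<in>S - D. emb ar R (insert x F) S (\<psi>(x := u))"
proof -
  \<comment> \<open>Strongly amalgamate \<psi> with the inclusion of F into insert x F, then use ultrahomogeneity
    to move the amalgam back into S fixing B; strongness keeps the new point outside B.\<close>
  define B where "B = \<psi> ` F \<union> (D \<inter> S)"
  define C where "C = insert x F"
  have B: "finite B" "B \<subseteq> S" and C: "finite C" "C \<subseteq> S"
    using F x D \<psi> by (auto simp: B_def C_def emb_def)
  have "restrict \<psi> F \<in> Emb ar R F B" "restrict id F \<in> Emb ar R F C"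
    using emb_subset[OF \<psi> order_refl, of B] emb_id_subset[of F C]
    by (auto simp: B_def C_def intro: restrict_in_Emb)
  with sa F B C obtain D' f' g' where D': "D' \<subseteq> S"
    and f'_Emb: "f' \<in> Emb ar R B D'" and g'_Emb: "g' \<in> Emb ar R C D'"
    and glue_restrict: "\<forall>y\<in>F. f' (restrict \<psi> F y) = g' (restrict id F y)"
    and disjoint_restrict: "f' ` B \<inter> g' ` C = f' ` restrict \<psi> F ` F"
    unfolding strong_amalgamation_def by metis
  have glue: "\<forall>y\<in>F. f' (\<psi> y) = g' y" and disjoint: "f' ` B \<inter> g' ` C = f' ` \<psi> ` F"
    using glue_restrict disjoint_restrict by simp_all
  have f': "emb ar R B D' f'" and g': "emb ar R C D' g'"
    using f'_Emb g'_Emb by (simp_all add: Emb_def)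
  obtain \<tau> where \<tau>: "emb ar R S S \<tau>" and \<tau>_undo: "\<forall>b\<in>B. \<tau> (f' b) = b"
    using fraisse_limit_undo_emb[OF fl B emb_mono_codomain[OF f' D']] by blast
  have \<tau>g': "emb ar R C S (\<tau> \<circ> g')"
    using emb_comp[OF emb_mono_codomain[OF g' D'] \<tau>] .
  have \<tau>_glue: "\<tau> (g' y) = \<psi> y" if "y \<in> F" for y
    using that glue \<tau>_undo by (metis B_def UnI1 image_eqI)
  define u where "u = \<tau> (g' x)"
  have "u \<notin> B"
  proof
    assume "u \<in> B"
    have "f' u \<in> S" "g' x \<in> S"
      using f' g' D' \<open>u \<in> B\<close> by (auto simp: emb_def C_def)
    moreover have "\<tau> (f' u) = \<tau> (g' x)"
      using \<tau>_undo \<open>u \<in> B\<close> by (simp add: u_def)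
    ultimately have "f' u = g' x"
      using \<tau> unfolding emb_def by (meson inj_onD)
    then have "g' x \<in> f' ` B \<inter> g' ` C"
      using \<open>u \<in> B\<close> by (auto simp: C_def intro: rev_image_eqI)
    then obtain y where "y \<in> F" "g' x = g' y"
      unfolding disjoint using glue by auto
    with g' x show False
      by (auto simp: emb_def C_def inj_on_eq_iff)
  qed
  moreover have "u \<in> S"
    using \<tau>g' by (auto simp: emb_def u_def C_def)
  moreover have "emb ar R (insert x F) S (\<psi>(x := u))"
    using \<tau>g' unfolding C_def by (rule emb_cong) (auto simp: u_def \<tau>_glue)
  ultimately show ?thesis
    by (auto simp: B_def)
qed

lemma
  assumes "enumerated S lt"
  shows enumerated_irrefl: "x \<in> S \<Longrightarrow> \<not> lt x x"
    and enumerated_trans: "x \<in> S \<Longrightarrow> y \<in> S \<Longrightarrow> z \<in> S \<Longrightarrow> lt x y \<Longrightarrow> lt y z \<Longrightarrow> lt x z"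
    and enumerated_total: "x \<in> S \<Longrightarrow> y \<in> S \<Longrightarrow> x \<noteq> y \<Longrightarrow> lt x y \<or> lt y x"
    and enumerated_finite_below: "x \<in> S \<Longrightarrow> finite {y\<in>S. lt y x}"
    and enumerated_infinite: "infinite S"
  using assms unfolding enumerated_def by blast+

definition enum_rank :: "'a set \<Rightarrow> ('a \<Rightarrow> 'a \<Rightarrow> bool) \<Rightarrow> 'a \<Rightarrow> nat" where
  "enum_rank S lt x = card {y\<in>S. lt y x}"

lemma enum_rank_less:
  assumes en: "enumerated S lt" and "x \<in> S" "y \<in> S" "lt x y"
  shows "enum_rank S lt x < enum_rank S lt y"
proof -
  have "{z\<in>S. lt z x} \<subset> {z\<in>S. lt z y}"
    using assms enumerated_trans[OF en] enumerated_irrefl[OF en] by blast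
  then show ?thesis
    unfolding enum_rank_def by (simp add: psubset_card_mono enumerated_finite_below[OF en \<open>y \<in> S\<close>])
qed

lemma inj_on_enum_rank:
  assumes en: "enumerated S lt"
  shows "inj_on (enum_rank S lt) S"
proof (rule inj_onI)
  fix x y assume "x \<in> S" "y \<in> S" "enum_rank S lt x = enum_rank S lt y"
  then show "x = y"
    using enum_rank_less[OF en] enumerated_total[OF en] by (metis less_irrefl)
qed

lemma finite_enum_rank_less:
  assumes "enumerated S lt"
  shows "finite {s\<in>S. enum_rank S lt s < n}"
proof -
  have "finite (enum_rank S lt ` {s\<in>S. enum_rank S lt s < n})"
    by (rule finite_subset[of _ "{..<n}"]) auto
  then show ?thesis
    using inj_on_enum_rank[OF assms] by (auto dest: finite_imageD intro: inj_on_subset)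
qed

lemma enumerated_finite_not_above:
  assumes en: "enumerated S lt" and "finite Z" "Z \<subseteq> S"
  shows "finite {y\<in>S. \<exists>z\<in>Z. \<not> lt z y}"
proof (rule finite_subset)
  show "{y\<in>S. \<exists>z\<in>Z. \<not> lt z y} \<subseteq> Z \<union> (\<Union>z\<in>Z. {y\<in>S. lt y z})"
    using assms enumerated_total[OF en] by blast
  show "finite (Z \<union> (\<Union>z\<in>Z. {y\<in>S. lt y z}))"
    using assms enumerated_finite_below[OF en] by blast
qed

lemma enumerated_strict_mono_iff:
  assumes en: "enumerated S lt" and "f ` S \<subseteq> S"
    and mono: "\<And>x y. x \<in> S \<Longrightarrow> y \<in> S \<Longrightarrow> lt x y \<Longrightarrow> lt (f x) (f y)"
    and "x \<in> S" "y \<in> S"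
  shows "lt (f x) (f y) \<longleftrightarrow> lt x y"
proof
  assume fxy: "lt (f x) (f y)"
  have "f x \<in> S" "f y \<in> S"
    using assms by auto
  show "lt x y"
  proof (rule ccontr)
    assume "\<not> lt x y"
    with assms have "x = y \<or> lt y x"
      using enumerated_total[OF en] by blast
    then have "lt (f x) (f x)"
      using fxy mono[of y x] assms \<open>f x \<in> S\<close> \<open>f y \<in> S\<close> enumerated_trans[OF en] by blast
    then show False
      using enumerated_irrefl[OF en \<open>f x \<in> S\<close>] by blast
  qed
qed (rule mono[OF \<open>x \<in> S\<close> \<open>y \<in> S\<close>])

lemma dependent_choice_prefixes:
  assumes local: "\<And>n g g'. (\<And>i. i < n \<Longrightarrow> g i = g' i) \<Longrightarrow> P n g \<Longrightarrow> P n g'"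
    and start: "P 0 g0"
    and extend: "\<And>n g. P n g \<Longrightarrow> \<exists>u. P (Suc n) (g(n := u))"
  shows "\<exists>q. \<forall>n. P n q"
proof -
  define G where "G = rec_nat g0 (\<lambda>n g. g(n := SOME u. P (Suc n) (g(n := u))))"
  have G: "P n (G n)" for n
  proof (induction n)
    case (Suc n)
    have "G (Suc n) = (G n)(n := SOME u. P (Suc n) ((G n)(n := u)))"
      by (simp add: G_def)
    then show ?case
      using someI_ex[OF extend[OF Suc.IH]] by (simp only:)
  qed (simp add: G_def start)
  have stable: "G m i = G (Suc i) i" if "i < m" for i m
    using that by (induction m) (auto simp: G_def less_Suc_eq)
  show ?thesis
    using local[OF stable G] by blast
qed

text \<open>Stage n of building an ordered copy of S inside w ` S: the i-th point of the enumeration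
  is to be sent to w (q i), and this is already correct for the first n points.\<close>

definition ordered_partial_copy ::
    "('l \<Rightarrow> nat) \<Rightarrow> ('l \<Rightarrow> 'a list \<Rightarrow> bool) \<Rightarrow> 'a set \<Rightarrow> ('a \<Rightarrow> 'a \<Rightarrow> bool) \<Rightarrow>
     ('a \<Rightarrow> 'a) \<Rightarrow> nat \<Rightarrow> (nat \<Rightarrow> 'a) \<Rightarrow> bool" where
  "ordered_partial_copy ar R S lt w n q \<longleftrightarrow>
     q ` {..<n} \<subseteq> S \<and> (\<forall>i j. i < j \<and> j < n \<longrightarrow> lt (w (q i)) (w (q j))) \<and>
     emb ar R {s\<in>S. enum_rank S lt s < n} S (q \<circ> enum_rank S lt)"

lemma ordered_partial_copy_cong:
  assumes "\<And>i. i < n \<Longrightarrow> q i = q' i" "ordered_partial_copy ar R S lt w n q"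
  shows "ordered_partial_copy ar R S lt w n q'"
  using assms unfolding ordered_partial_copy_def by (auto intro: emb_cong)

lemma ordered_partial_copy_0: "ordered_partial_copy ar R S lt w 0 q"
  unfolding ordered_partial_copy_def emb_def by simp

lemma emb_enum_prefix_extend:
  assumes en: "enumerated S lt" and fl: "fraisse_limit ar R S" and sa: "strong_amalgamation ar R S"
    and q: "emb ar R {s\<in>S. enum_rank S lt s < n} S (q \<circ> enum_rank S lt)" and D: "finite D"
  shows "\<exists>u\<in>S - D. emb ar R {s\<in>S. enum_rank S lt s < Suc n} S (q(n := u) \<circ> enum_rank S lt)"
proof (cases "\<exists>x\<in>S. enum_rank S lt x = n")
  case True
  then obtain x where x: "x \<in> S" "enum_rank S lt x = n" by blast
  let ?X = "{s\<in>S. enum_rank S lt s < n}"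
  have X_Suc: "{s\<in>S. enum_rank S lt s < Suc n} = insert x ?X" and "x \<notin> ?X"
    using x inj_on_enum_rank[OF en] by (auto simp: less_Suc_eq inj_on_def)
  obtain u where "u \<in> S - D" and u: "emb ar R (insert x ?X) S ((q \<circ> enum_rank S lt)(x := u))"
    using emb_extend_avoiding[OF fl sa finite_enum_rank_less[OF en] _ x(1) \<open>x \<notin> ?X\<close> q D] by auto
  moreover have "emb ar R (insert x ?X) S (q(n := u) \<circ> enum_rank S lt)"
    using u by (rule emb_cong) (auto simp: x)
  ultimately show ?thesis
    unfolding X_Suc by blast
next
  \<comment> \<open>impossible for order type \<omega>, but this is easier than proving that enum_rank is onto\<close>
  case False
  then have X_Suc: "{s\<in>S. enum_rank S lt s < Suc n} = {s\<in>S. enum_rank S lt s < n}"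
    by (auto simp: less_Suc_eq)
  have "infinite (S - D)"
    using enumerated_infinite[OF en] D by (rule Diff_infinite_finite[rotated])
  then obtain u where "u \<in> S - D"
    by (metis finite.emptyI ex_in_conv)
  moreover have "emb ar R {s\<in>S. enum_rank S lt s < n} S (q(n := u) \<circ> enum_rank S lt)"
    using q by (rule emb_cong) auto
  ultimately show ?thesis
    unfolding X_Suc by blast
qed

lemma ordered_partial_copy_extend:
  assumes en: "enumerated S lt" and fl: "fraisse_limit ar R S" and sa: "strong_amalgamation ar R S"
    and w: "emb ar R S S w" and q: "ordered_partial_copy ar R S lt w n q"
  shows "\<exists>u. ordered_partial_copy ar R S lt w (Suc n) (q(n := u))"
proof -
  define D where "D = w -` {y\<in>S. \<exists>z\<in>w ` q ` {..<n}. \<not> lt z y} \<inter> S"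
  have "finite D"
    unfolding D_def using q w
    by (intro finite_vimage_IntI enumerated_finite_not_above[OF en])
       (auto simp: ordered_partial_copy_def emb_def image_subset_iff)
  moreover have "emb ar R {s\<in>S. enum_rank S lt s < n} S (q \<circ> enum_rank S lt)"
    using q by (simp add: ordered_partial_copy_def)
  ultimately obtain u where "u \<in> S - D"
    and u_emb: "emb ar R {s\<in>S. enum_rank S lt s < Suc n} S (q(n := u) \<circ> enum_rank S lt)"
    using emb_enum_prefix_extend[OF en fl sa] by blast
  have "q(n := u) ` {..<Suc n} \<subseteq> S"
    using q \<open>u \<in> S - D\<close> by (auto simp: ordered_partial_copy_def less_Suc_eq)
  moreover have "lt (w (q i)) (w u)" if "i < n" for i
    using \<open>u \<in> S - D\<close> that w by (auto simp: D_def emb_def)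
  then have "lt (w ((q(n := u)) i)) (w ((q(n := u)) j))" if "i < j" "j < Suc n" for i j
    using q that by (auto simp: ordered_partial_copy_def less_Suc_eq)
  ultimately show ?thesis
    using u_emb unfolding ordered_partial_copy_def by blast
qed

lemma ordered_copy_inside_copy:
  assumes en: "enumerated S lt" and fl: "fraisse_limit ar R S" and sa: "strong_amalgamation ar R S"
    and w: "emb ar R S S w"
  shows "\<exists>\<phi>. \<phi> ` S \<subseteq> w ` S \<and> oemb ar R lt S S \<phi>"
proof -
  let ?r = "enum_rank S lt"
  have "\<exists>q. \<forall>n. ordered_partial_copy ar R S lt w n q"
    by (rule dependent_choice_prefixes[of "ordered_partial_copy ar R S lt w"])
      (fact ordered_partial_copy_cong ordered_partial_copy_0 ordered_partial_copy_extend[OF en fl sa w])+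
  then obtain q where q: "\<And>n. ordered_partial_copy ar R S lt w n q"
    by blast
  have q_in: "q i \<in> S" for i
    using q[of "Suc i"] by (auto simp: ordered_partial_copy_def)
  have q_mono: "lt (w (q i)) (w (q j))" if "i < j" for i j
    using q[of "Suc j"] that by (simp add: ordered_partial_copy_def)
  have "emb ar R S S (q \<circ> ?r)"
  proof (rule emb_if_emb_on_finite_subsets)
    fix F assume "finite F" "F \<subseteq> S"
    then obtain N where "F \<subseteq> {s\<in>S. ?r s < N}"
      using finite_nat_bounded[of "?r ` F"] by auto
    then show "emb ar R F S (q \<circ> ?r)"
      using q[of N] unfolding ordered_partial_copy_def by (auto intro: emb_subset_domain)
  qed
  define \<phi> where "\<phi> = w \<circ> (q \<circ> ?r)"
  have "emb ar R S S \<phi>"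
    unfolding \<phi>_def using \<open>emb ar R S S (q \<circ> ?r)\<close> w by (rule emb_comp)
  moreover have "\<phi> ` S \<subseteq> w ` S"
    using q_in by (auto simp: \<phi>_def)
  moreover have "lt (\<phi> x) (\<phi> y)" if "x \<in> S" "y \<in> S" "lt x y" for x y
    unfolding \<phi>_def using q_mono enum_rank_less[OF en that] by simp
  moreover have "\<phi> ` S \<subseteq> S"
    using \<open>emb ar R S S \<phi>\<close> by (simp add: emb_def)
  ultimately show ?thesis
    unfolding oemb_def using enumerated_strict_mono_iff[OF en, of \<phi>] by blast
qed

lemma Emb_factor_through_image:
  assumes w: "emb ar R S T w" and g: "emb ar R A T g" and "g ` A \<subseteq> w ` S"
  shows "\<exists>f\<in>Emb ar R A S. restrict (w \<circ> f) A = restrict g A"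
proof
  show "restrict (inv_into S w \<circ> g) A \<in> Emb ar R A S"
    using emb_comp[OF emb_subset[OF g order_refl assms(3)] emb_inv_into[OF w]]
    by (rule restrict_in_Emb)
  show "restrict (w \<circ> restrict (inv_into S w \<circ> g) A) A = restrict g A"
    using assms(3) by (auto simp: f_inv_into_f image_subset_iff)
qed

lemma binom_inside_copy:
  assumes w: "emb ar R S S w" and "S' \<subseteq> w ` S" and "E \<in> binom ar R lt S' A"
  shows "\<exists>f\<in>Emb ar R A S. oemb ar R lt A S (restrict (w \<circ> f) A) \<and> restrict (w \<circ> f) A ` A = E"
proof -
  obtain g where E: "E \<subseteq> S'" and g: "bij_betw g A E" "oemb ar R lt A E g"
    using assms(3) unfolding binom_def oiso_def by blast
  have "w ` S \<subseteq> S"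
    using w by (simp add: emb_def)
  with g(2) E assms(2) have "emb ar R A S g"
    by (meson emb_mono_codomain oemb_def order_trans)
  then have g_emb: "emb ar R A S (restrict g A)"
    by (rule emb_cong) simp
  have g_image: "restrict g A ` A = E"
    using g(1) by (simp add: bij_betw_def)
  with E assms(2) have "restrict g A ` A \<subseteq> w ` S"
    by blast
  then obtain f where "f \<in> Emb ar R A S" "restrict (w \<circ> f) A = restrict g A"
    using Emb_factor_through_image[OF w g_emb] by auto
  moreover have "oemb ar R lt A S (restrict g A)"
    using g_emb g(2) by (simp add: oemb_def)
  ultimately show ?thesis
    using g_image by metis
qed

lemma finite_big_ramsey_degrees_copies:
  assumes en: "enumerated S lt" and fl: "fraisse_limit ar R S" and sa: "strong_amalgamation ar R S"
    and brd: "finite_big_ramsey_degrees ar R S" and A: "finite A" "A \<subseteq> S"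
  shows "\<exists>n. \<forall>k (\<chi>::'a set \<Rightarrow> nat). (\<forall>E\<in>binom ar R lt S A. \<chi> E < k) \<longrightarrow>
           (\<exists>S'\<subseteq>S. oiso ar R lt S S' \<and> card (\<chi> ` binom ar R lt S' A) \<le> n)"
proof -
  obtain n where n: "\<And>k (\<chi>'::('a \<Rightarrow> 'a) \<Rightarrow> nat). \<forall>f\<in>Emb ar R A S. \<chi>' f < k \<Longrightarrow>
      \<exists>w\<in>Emb ar R S S. card (\<chi>' ` {restrict (w \<circ> f) A | f. f \<in> Emb ar R A S}) \<le> n"
    using brd A unfolding finite_big_ramsey_degrees_def by blast
  have "\<exists>S'\<subseteq>S. oiso ar R lt S S' \<and> card (\<chi> ` binom ar R lt S' A) \<le> n"
    if \<chi>: "\<forall>E\<in>binom ar R lt S A. \<chi> E < k" for k and \<chi> :: "'a set \<Rightarrow> nat"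
  proof -
    define \<chi>' where "\<chi>' h = (if oemb ar R lt A S h then \<chi> (h ` A) else 0)" for h
    have \<chi>'_bound: "\<chi>' h < Suc k" for h
    proof (cases "oemb ar R lt A S h")
      case True
      then have "h ` A \<in> binom ar R lt S A"
        using oemb_imp_oiso_image[OF True] by (auto simp: binom_def oemb_def emb_def)
      then show ?thesis
        using True \<chi> by (simp add: \<chi>'_def less_Suc_eq)
    qed (simp add: \<chi>'_def)
    then obtain w where "w \<in> Emb ar R S S"
      and few_colours: "card (\<chi>' ` {restrict (w \<circ> f) A | f. f \<in> Emb ar R A S}) \<le> n"
        (is "card ?C \<le> n")
      using n by blast
    then have w: "emb ar R S S w"
      by (simp add: Emb_def)
    obtain \<phi> where \<phi>: "\<phi> ` S \<subseteq> w ` S" "oemb ar R lt S S \<phi>"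
      using ordered_copy_inside_copy[OF en fl sa w] by blast
    have "\<chi> ` binom ar R lt (\<phi> ` S) A \<subseteq> ?C"
    proof
      fix c assume "c \<in> \<chi> ` binom ar R lt (\<phi> ` S) A"
      then obtain E where "c = \<chi> E" "E \<in> binom ar R lt (\<phi> ` S) A"
        by blast
      then obtain f where "f \<in> Emb ar R A S" "\<chi>' (restrict (w \<circ> f) A) = c"
        using binom_inside_copy[OF w \<phi>(1)] by (metis \<chi>'_def)
      then show "c \<in> ?C"
        by blast
    qed
    moreover have "finite ?C"
      using \<chi>'_bound by (blast intro: finite_subset[of _ "{..<Suc k}"])
    ultimately have "card (\<chi> ` binom ar R lt (\<phi> ` S) A) \<le> n"
      using few_colours by (meson card_mono le_trans)
    moreover have "\<phi> ` S \<subseteq> S"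
      using \<phi>(2) by (simp add: oemb_def emb_def)
    ultimately show ?thesis
      using oemb_imp_oiso_image[OF \<phi>(2)] by blast
  qed
  then show ?thesis
    by blast
qed

theorem corollary6p8:
  fixes ar :: "'l \<Rightarrow> nat" and R :: "'l \<Rightarrow> 'a list \<Rightarrow> bool"
    and lt :: "'a \<Rightarrow> 'a \<Rightarrow> bool" and S :: "'a set"
  assumes "enumerated S lt"
    and "fraisse_limit ar R S"
    and "finite_big_ramsey_degrees ar R S"
    and "strong_amalgamation ar R S"
    and "natural_1pt_ext ar R S"
  shows "\<forall>A\<in>Fin S. \<exists>n::nat. \<forall>(k::nat) (\<gamma>::'a set \<Rightarrow> 'a set \<Rightarrow> nat).
           (\<forall>B\<in>Fin S. \<forall>E\<in>binom ar R lt B A. \<gamma> B E < k) \<longrightarrow>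
           (\<exists>S' c. S' \<subseteq> S \<and> oiso ar R lt S S' \<and>
              (\<forall>E\<in>binom ar R lt S' A. c E \<in> Fin S \<and> E \<subseteq> c E) \<and>
              card {\<gamma> (c E) E | E. E \<in> binom ar R lt S' A} \<le> n)"
proof
  fix A assume "A \<in> Fin S"
  then have A: "finite A" "A \<noteq> {}" "A \<subseteq> S"
    by (auto simp: Fin_def)
  obtain n where n: "\<And>k (\<chi> :: 'a set \<Rightarrow> nat). \<forall>E\<in>binom ar R lt S A. \<chi> E < k \<Longrightarrow>
      \<exists>S'\<subseteq>S. oiso ar R lt S S' \<and> card (\<chi> ` binom ar R lt S' A) \<le> n"
    using finite_big_ramsey_degrees_copies[OF assms(1,2,4,3) A(1,3)] by blast
  show "\<exists>n::nat. \<forall>(k::nat) (\<gamma>::'a set \<Rightarrow> 'a set \<Rightarrow> nat).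
      (\<forall>B\<in>Fin S. \<forall>E\<in>binom ar R lt B A. \<gamma> B E < k) \<longrightarrow>
      (\<exists>S' c. S' \<subseteq> S \<and> oiso ar R lt S S' \<and>
         (\<forall>E\<in>binom ar R lt S' A. c E \<in> Fin S \<and> E \<subseteq> c E) \<and>
         card {\<gamma> (c E) E | E. E \<in> binom ar R lt S' A} \<le> n)"
  proof (intro exI[of _ n] allI impI)
    fix k and \<gamma> :: "'a set \<Rightarrow> 'a set \<Rightarrow> nat"
    assume \<gamma>: "\<forall>B\<in>Fin S. \<forall>E\<in>binom ar R lt B A. \<gamma> B E < k"
    have "\<gamma> E E < k" if "E \<in> binom ar R lt S A" for E
      using \<gamma> Fin_if_in_binom[OF A(1,2) order_refl that] that by (simp add: binom_def)
    then obtain S' where "S' \<subseteq> S" "oiso ar R lt S S'"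
      and "card ((\<lambda>E. \<gamma> E E) ` binom ar R lt S' A) \<le> n"
      using n[of "\<lambda>E. \<gamma> E E"] by blast
    moreover have "{\<gamma> E E | E. E \<in> binom ar R lt S' A} = (\<lambda>E. \<gamma> E E) ` binom ar R lt S' A"
      by blast
    ultimately show "\<exists>S' c. S' \<subseteq> S \<and> oiso ar R lt S S' \<and>
        (\<forall>E\<in>binom ar R lt S' A. c E \<in> Fin S \<and> E \<subseteq> c E) \<and>
        card {\<gamma> (c E) E | E. E \<in> binom ar R lt S' A} \<le> n"
      using Fin_if_in_binom[OF A(1,2)] by (intro exI[of _ S'] exI[of _ "\<lambda>E. E"]) auto
  qed
qed

end
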